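(* Let $(x_1,y_1),\dots,(x_n,y_n)\in\mathbb{R}^d\times\mathbb{R}$, $X=(x_1,\dots,x_n)$, $Y=(y_1,\dots,y_n)^T$, $\sigma(z)=\max(z,0)$, and $\lambda>0$. Consider the gradient flow on all weights of $f_t(x)=\sum_{j=1}^mw_j(t)\sigma(x^Tu_j(t))$ for the $\ell_2$-regularized empirical risk $$\frac1{2n}\sum_{i=1}^n(y_i-f_t(x_i))^2+\frac{\lambda}{2m}\sum_{j=1}^m\big[w_j(t)^2+\|u_j(t)\|^2\big],$$ i.e. $\frac{dw_j}{dt}=\frac1n\sum_i(y_i-f_t(x_i))\sigma(x_i^Tu_j)-\frac{\lambda}{m}w_j$, $\frac{du_j}{dt}=\frac1n\sum_i(y_i-f_t(x_i))w_j\mathbb{1}_{x_i^Tu_j\ge0}x_i-\frac{\lambda}{m}u_j$. Assume only that $|w_j(0)^2-\|u_j(0)\|^2|<\infty$ for all $1\le j\le m$. Suppose the dynamics reaches a stationarity, with limiting weights $(w_j(\infty),u_j(\infty))$, signed measure $\widehat\rho^\lambda_\infty=\frac1m\sum_{l=1}^m\mathrm{sgn}(w_l(\infty))\delta_{\sqrt m\,u_l(\infty)}$ and adaptive kernel $\widehat H^\lambda_\infty(x,\tilde x)=\int\sigma(x^T\Theta)\sigma(\tilde x^T\Theta)|\widehat\rho^\lambda_\infty|(d\Theta)$. Then the network function at stationarity satisfies, for every $x$, $$\widehat f^{\mathrm{nn},\lambda}_\infty(x)=\widehat H^\lambda_\infty(x,X)\Big[\tfrac nm\lambda\, I_n+\widehat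 H^\lambda_\infty(X,X)\Big]^{-1}Y,$$ where $\widehat H^\lambda_\infty(x,X)\in\mathbb{R}^{1\times n}$ and $\widehat H^\lambda_\infty(X,X)\in\mathbb{R}^{n\times n}$ are the kernel evaluations.
   Context: For a signed measure $\rho=\rho_+-\rho_-$, $|\rho|=\rho_++\rho_-$, so $|\widehat\rho^\lambda_\infty|=\frac1m\sum_l\delta_{\sqrt m u_l(\infty)}$. "Stationarity" means the $t\to\infty$ limit of the gradient flow, at which the gradient-flow vector field vanishes. *)

theory Defs
  imports "HOL-Analysis.Analysis"
begin

definition relu :: "real \<Rightarrow> real" where
  "relu z = max z 0"

definition netf :: "('m::finite \<Rightarrow> real) \<Rightarrow> ('m \<Rightarrow> real^'d) \<Rightarrow> real^'d \<Rightarrow> real" where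
  "netf w u x = (\<Sum>j\<in>UNIV. w j * relu (x \<bullet> u j))"

definition vf_w :: "('n::finite \<Rightarrow> real^'d) \<Rightarrow> real^'n \<Rightarrow> real \<Rightarrow>
    ('m::finite \<Rightarrow> real) \<Rightarrow> ('m \<Rightarrow> real^'d) \<Rightarrow> 'm \<Rightarrow> real" where
  "vf_w X Y lam w u j =
     (1 / real CARD('n)) * (\<Sum>i\<in>UNIV. (Y $ i - netf w u (X i)) * relu (X i \<bullet> u j))
     - (lam / real CARD('m)) * w j"

definition vf_u :: "('n::finite \<Rightarrow> real^'d) \<Rightarrow> real^'n \<Rightarrow> real \<Rightarrow>
    ('m::finite \<Rightarrow> real) \<Rightarrow> ('m \<Rightarrow> real^'d) \<Rightarrow> 'm \<Rightarrow> real^'d" where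
  "vf_u X Y lam w u j =
     (1 / real CARD('n)) *\<^sub>R (\<Sum>i\<in>UNIV. ((Y $ i - netf w u (X i)) * w j *
         (if X i \<bullet> u j \<ge> 0 then 1 else 0)) *\<^sub>R X i)
     - (lam / real CARD('m)) *\<^sub>R u j"

text \<open>Adaptive kernel: integral of relu(x.Theta) relu(x'.Theta) against
  |rho| = (1/m) sum_l delta_{sqrt m u_l}, written out as the finite sum.\<close>
definition adaptive_kernel :: "('m::finite \<Rightarrow> real^'d) \<Rightarrow> real^'d \<Rightarrow> real^'d \<Rightarrow> real" where
  "adaptive_kernel u x x' =
     (1 / real CARD('m)) * (\<Sum>l\<in>UNIV. relu (x \<bullet> (sqrt (real CARD('m)) *\<^sub>R u l))
                                     * relu (x' \<bullet> (sqrt (real CARD('m)) *\<^sub>R u l)))"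

end

theory Submission
  imports Defs
begin

text \<open>At a stationary point the equation for the outer weights reads
  \<open>c w\<^sub>j = \<Sum>\<^sub>i r\<^sub>i \<sigma>(x\<^sub>i\<^sup>T u\<^sub>j)\<close> with \<open>c = (n/m) \<lambda>\<close> and the residual \<open>r = Y - f(X)\<close>.
  Substituting into the network turns it into a kernel expansion \<open>c f(x) = H(x,X) r\<close>;
  evaluated at the samples this gives \<open>(c I + H(X,X)) r = c Y\<close>. Since \<open>H(X,X)\<close> is a Gram
  matrix, \<open>c I + H(X,X)\<close> is positive definite, hence invertible, and solving for \<open>r\<close>
  gives the formula.\<close>

lemma relu_mult_nonneg: "s \<ge> 0 \<Longrightarrow> relu (s * t) = s * relu t"
  unfolding relu_def by (simp add: max_def mult_le_0_iff zero_le_mult_iff)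

lemma adaptive_kernel_eq:
  "adaptive_kernel (u :: 'm::finite \<Rightarrow> real^'d) x x' =
     (\<Sum>l\<in>UNIV. relu (x \<bullet> u l) * relu (x' \<bullet> u l))"
proof -
  let ?s = "sqrt (real CARD('m))"
  have "relu (x \<bullet> (?s *\<^sub>R u l)) * relu (x' \<bullet> (?s *\<^sub>R u l))
          = real CARD('m) * (relu (x \<bullet> u l) * relu (x' \<bullet> u l))" for l
    by (simp add: relu_mult_nonneg)
  then show ?thesis
    unfolding adaptive_kernel_def by (simp add: sum_distrib_left[symmetric])
qed

lemma gram_matrix_quadratic_form:
  fixes \<phi> :: "'n::finite \<Rightarrow> 'm::finite \<Rightarrow> real" and v :: "real^'n"
  shows "v \<bullet> ((\<chi> i k. \<Sum>l\<in>UNIV. \<phi> i l * \<phi> k l) *v v) = (\<Sum>l\<in>UNIV. (\<Sum>i\<in>UNIV. v $ i * \<phi> i l)\<^sup>2)"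
proof -
  have "v \<bullet> ((\<chi> i k. \<Sum>l\<in>UNIV. \<phi> i l * \<phi> k l) *v v)
          = (\<Sum>i\<in>UNIV. \<Sum>k\<in>UNIV. \<Sum>l\<in>UNIV. v $ i * \<phi> i l * (v $ k * \<phi> k l))"
    unfolding inner_vec_def matrix_vector_mult_def
    by (simp add: sum_distrib_left sum_distrib_right mult_ac)
  also have "\<dots> = (\<Sum>i\<in>UNIV. \<Sum>l\<in>UNIV. \<Sum>k\<in>UNIV. v $ i * \<phi> i l * (v $ k * \<phi> k l))"
    by (rule sum.cong[OF refl], rule sum.swap)
  also have "\<dots> = (\<Sum>l\<in>UNIV. \<Sum>i\<in>UNIV. \<Sum>k\<in>UNIV. v $ i * \<phi> i l * (v $ k * \<phi> k l))"
    by (rule sum.swap)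
  finally show ?thesis
    by (simp add: power2_eq_square sum_product)
qed

lemma invertible_scaleR_mat_plus_psd:
  fixes K :: "real^'n^'n"
  assumes "c > 0" and psd: "\<And>v. v \<bullet> (K *v v) \<ge> 0"
  shows "invertible (c *\<^sub>R mat 1 + K)"
  unfolding invertible_left_inverse matrix_left_invertible_ker
proof (intro allI impI)
  fix v :: "real^'n"
  assume "(c *\<^sub>R mat 1 + K) *v v = 0"
  then have "c *\<^sub>R v + K *v v = 0"
    by (simp add: matrix_vector_mult_add_rdistrib flip: scaleR_matrix_vector_assoc)
  then have "c * (v \<bullet> v) + v \<bullet> (K *v v) = 0"
    by (metis inner_add_right inner_scaleR_right inner_zero_right)
  then have "v \<bullet> v \<le> 0"
    using psd[of v] \<open>c > 0\<close> by (smt (verit) mult_pos_pos inner_ge_zero)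
  then show "v = 0" by (metis inner_gt_zero_iff not_le)
qed

lemma matrix_inv_left:
  fixes A :: "'a::semiring_1^'n^'m"
  assumes "invertible A"
  shows "matrix_inv A ** A = mat 1"
  using assms unfolding invertible_def matrix_inv_def by (rule someI2_ex) auto

lemma matrix_inv_mult_vector_eq:
  fixes A :: "real^'n^'m"
  assumes "invertible A" and "A *v r = b"
  shows "matrix_inv A *v b = r"
  using assms by (metis matrix_inv_left matrix_vector_mul_assoc matrix_vector_mul_lid)

definition residual :: "('n::finite \<Rightarrow> real^'d) \<Rightarrow> real^'n \<Rightarrow>
    ('m::finite \<Rightarrow> real) \<Rightarrow> ('m \<Rightarrow> real^'d) \<Rightarrow> real^'n" where
  "residual X Y w u = (\<chi> i. Y $ i - netf w u (X i))"

lemma vf_w_eq_0_iff: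
  fixes X :: "'n::finite \<Rightarrow> real^'d" and w :: "'m::finite \<Rightarrow> real"
  shows "vf_w X Y lam w u j = 0 \<longleftrightarrow>
           real CARD('n) / real CARD('m) * lam * w j =
             (\<Sum>i\<in>UNIV. residual X Y w u $ i * relu (X i \<bullet> u j))"
  unfolding vf_w_def residual_def by (auto simp: field_simps)

lemma stationary_netf_kernel_expansion:
  fixes X :: "'n::finite \<Rightarrow> real^'d" and w :: "'m::finite \<Rightarrow> real"
  assumes "\<And>j. vf_w X Y lam w u j = 0"
  shows "real CARD('n) / real CARD('m) * lam * netf w u y =
           (\<Sum>i\<in>UNIV. residual X Y w u $ i * adaptive_kernel u y (X i))"
proof -
  let ?c = "real CARD('n) / real CARD('m) * lam" and ?r = "residual X Y w u"
  have "?c * netf w u y = (\<Sum>j\<in>UNIV. (?c * w j) * relu (y \<bullet> u j))"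
    unfolding netf_def by (simp add: sum_distrib_left mult_ac)
  also have "\<dots> = (\<Sum>j\<in>UNIV. \<Sum>i\<in>UNIV. ?r $ i * (relu (y \<bullet> u j) * relu (X i \<bullet> u j)))"
    using assms by (simp add: vf_w_eq_0_iff sum_distrib_left mult_ac)
  also have "\<dots> = (\<Sum>i\<in>UNIV. ?r $ i * adaptive_kernel u y (X i))"
    unfolding adaptive_kernel_eq by (subst sum.swap) (simp add: sum_distrib_left)
  finally show ?thesis .
qed

lemma stationary_residual_equation:
  fixes X :: "'n::finite \<Rightarrow> real^'d" and w :: "'m::finite \<Rightarrow> real" and lam :: real
  defines "c \<equiv> real CARD('n) / real CARD('m) * lam"
  assumes "\<And>j. vf_w X Y lam w u j = 0"
  shows "(c *\<^sub>R mat 1 + (\<chi> i k. adaptive_kernel u (X i) (X k))) *v residual X Y w u = c *\<^sub>R Y"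
proof -
  let ?r = "residual X Y w u"
  let ?K = "\<chi> i k. adaptive_kernel u (X i) (X k)"
  have eq: "c * ?r $ i + (\<Sum>k\<in>UNIV. adaptive_kernel u (X i) (X k) * ?r $ k) = c * Y $ i" for i
  proof -
    have "(\<Sum>k\<in>UNIV. adaptive_kernel u (X i) (X k) * ?r $ k) = c * netf w u (X i)"
      using stationary_netf_kernel_expansion[OF assms(2), of "X i"] by (simp add: c_def mult.commute)
    moreover have "?r $ i = Y $ i - netf w u (X i)" by (simp add: residual_def)
    ultimately show ?thesis by (simp add: right_diff_distrib)
  qed
  have "(c *\<^sub>R mat 1 + ?K) *v ?r = c *\<^sub>R ?r + ?K *v ?r"
    by (simp add: matrix_vector_mult_add_rdistrib flip: scaleR_matrix_vector_assoc)
  also have "\<dots> = c *\<^sub>R Y"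
    using eq by (simp add: vec_eq_iff matrix_vector_mult_def)
  finally show ?thesis .
qed

theorem proposition1:
  fixes X :: "'n::finite \<Rightarrow> real^'d"
    and Y :: "real^'n"
    and lam :: real
    and W :: "real \<Rightarrow> 'm::finite \<Rightarrow> real"
    and U :: "real \<Rightarrow> 'm \<Rightarrow> real^'d"
    and winf :: "'m \<Rightarrow> real"
    and uinf :: "'m \<Rightarrow> real^'d"
    and x :: "real^'d"
  assumes lam_pos: "lam > 0"
    and flow_w: "\<And>t j. t \<ge> 0 \<Longrightarrow>
          ((\<lambda>s. W s j) has_real_derivative vf_w X Y lam (W t) (U t) j) (at t within {0..})"
    and flow_u: "\<And>t j. t \<ge> 0 \<Longrightarrow>
          ((\<lambda>s. U s j) has_vector_derivative vf_u X Y lam (W t) (U t) j) (at t within {0..})"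
    and lim_w: "\<And>j. ((\<lambda>t. W t j) \<longlongrightarrow> winf j) at_top"
    and lim_u: "\<And>j. ((\<lambda>t. U t j) \<longlongrightarrow> uinf j) at_top"
    and stat_w: "\<And>j. vf_w X Y lam winf uinf j = 0"
    and stat_u: "\<And>j. vf_u X Y lam winf uinf j = 0"
  shows "netf winf uinf x =
           (\<chi> i. adaptive_kernel uinf x (X i)) \<bullet>
           (matrix_inv ((real CARD('n) / real CARD('m) * lam) *\<^sub>R mat 1
                        + (\<chi> i k. adaptive_kernel uinf (X i) (X k))) *v Y)"
proof -
  define c where "c = real CARD('n) / real CARD('m) * lam"
  define A where "A = c *\<^sub>R mat 1 + (\<chi> i k. adaptive_kernel uinf (X i) (X k))"
  let ?r = "residual X Y winf uinf"
  have "c > 0" unfolding c_def using lam_pos by simp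
  have "invertible A"
    unfolding A_def adaptive_kernel_eq
    by (rule invertible_scaleR_mat_plus_psd[OF \<open>c > 0\<close>])
      (simp add: gram_matrix_quadratic_form sum_nonneg)
  then have "matrix_inv A *v (c *\<^sub>R Y) = ?r"
    using stationary_residual_equation[OF stat_w] by (simp add: matrix_inv_mult_vector_eq A_def c_def)
  then have "c *\<^sub>R (matrix_inv A *v Y) = ?r"
    by (simp add: matrix_scaleR_vector_ac flip: scaleR_matrix_vector_assoc)
  then have "matrix_inv A *v Y = (1 / c) *\<^sub>R ?r"
    using \<open>c > 0\<close> by (metis less_irrefl nonzero_divide_eq_eq scaleR_one scaleR_scaleR)
  then have "(\<chi> i. adaptive_kernel uinf x (X i)) \<bullet> (matrix_inv A *v Y)
               = (1 / c) * (\<Sum>i\<in>UNIV. ?r $ i * adaptive_kernel uinf x (X i))"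
    by (simp add: inner_vec_def sum_distrib_left mult_ac)
  also have "\<dots> = netf winf uinf x"
    using stationary_netf_kernel_expansion[OF stat_w, of x, folded c_def, symmetric] \<open>c > 0\<close>
    by simp
  finally show ?thesis unfolding A_def c_def by simp
qed

end
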